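(* Let $G$ be a maximal $1$-plane graph with at least $4$ vertices in which every edge lies in some $K_4$-subgraph, and let $\{G_i\}_{i\in\{0,\dots,N\}}$ be a $K_4$-extension sequence of $G$ determined by the SWM*-rule, with $G_i=G[V(G_{i-1})\cup V(F_i)]$. For any $i\in\{1,\dots,N\}$, if $F_i$ is a simple micro $K_4$-link from $G_{i-1}$, then $i<N$ and $G_{i+1}$ is a strong or weak $K_4$-extension of $G_i$.
   Context: A $1$-plane graph is a simple graph drawn in the plane (vertices distinct points, edges arcs joining their ends, no edge crossing itself, two edges crossing at most once, adjacent edges not crossing) so that every edge is crossed at most once; it is maximal if no edge joining two non-adjacent vertices can be added so that the result is still a simple $1$-plane graph. An edge is clean if it crosses no other edge. If edge $ux$ crosses another edge at point $\alpha$, the arc $u\alpha$ is the near half-edge of $ux$ incident with $u$. Two edge segments are consecutive on the boundary of a face if they are consecutive on one of the closed walks forming that boundary. $G[A]$ is the subgraph induced by $A$. For a vertex-induced subgraph $G'$ and a $K_4$-subgraph $F$ of $G$ with $1\le|V(F)\cap V(G')|\le 3$, $F$ is a strong/weak/micro $K_4$-link from $G'$ when $|V(F)\cap V(G')|=3/2/1$, and $G[V(G')\cup V(F)]$ is the corresponding $K_4$-extension of $G'$. SWM*-rule for a proper vertex-induced subgraph $G'$: choose any strong $K_4$-link from $G'$ if one exists; otherwise any weak one if one exists; otherwise choose $u\in V(G')$ with $N_G(u)\not\subseteq V(G')$, then $x\in N_G(u)\setminus V(G')$ such that for some $w\in N_G(u)\cap V(G')$ the edge $ux$ (or its near half-edge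 at $u$) and $uw$ (or its near half-edge at $u$) are consecutive on the boundary of some face of $G$; if $ux$ is clean choose any $K_4$-subgraph containing $ux$, and if $ux$ crosses edge $st$ choose $G[\{u,x,s,t\}]$. A $K_4$-extension sequence determined by the SWM*-rule is $G_0\cong K_4$, $G_N=G$, $G_i=G[V(G_{i-1})\cup V(F_i)]$ with $F_i$ a $K_4$-link from $G_{i-1}$ chosen by the SWM*-rule. If $F_i$ is a micro $K_4$-link from $G_{i-1}$ and $E(G_i)\setminus(E(G_{i-1})\cup E(F_i))$ consists of exactly one edge, then $F_i$ is called a simple micro $K_4$-link from $G_{i-1}$, and that edge is called the extra edge in $G_i$. *)

theory Defs
  imports "HOL-Analysis.Analysis"
begin

text \<open>A drawing of a graph with vertex set V and edge set E (edges are 2-element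
  vertex sets) in the plane (modelled as the complex plane): pos gives the
  position of each vertex, c gives for each edge a parametrised arc.\<close>

definition crossing_pt ::
  "'v set \<Rightarrow> ('v \<Rightarrow> complex) \<Rightarrow> ('v set \<Rightarrow> real \<Rightarrow> complex) \<Rightarrow> 'v set \<Rightarrow> 'v set \<Rightarrow> complex \<Rightarrow> bool" where
  "crossing_pt V pos c e f p \<longleftrightarrow> e \<noteq> f \<and> p \<in> path_image (c e) \<and> p \<in> path_image (c f) \<and> p \<notin> pos ` V"

definition transversal :: "complex set \<Rightarrow> complex set \<Rightarrow> complex \<Rightarrow> bool" where
  "transversal A B p \<longleftrightarrow>
     (\<exists>U h g. open U \<and> p \<in> U \<and> homeomorphism U (ball 0 1) h g \<and>
        h ` (A \<inter> U) = {z \<in> ball 0 1. Im z = 0} \<and>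
        h ` (B \<inter> U) = {z \<in> ball 0 1. Re z = 0})"

definition one_plane ::
  "'v set \<Rightarrow> 'v set set \<Rightarrow> ('v \<Rightarrow> complex) \<Rightarrow> ('v set \<Rightarrow> real \<Rightarrow> complex) \<Rightarrow> bool" where
  "one_plane V E pos c \<longleftrightarrow>
     finite V \<and> inj_on pos V \<and>
     (\<forall>e\<in>E. \<exists>a b. a \<in> V \<and> b \<in> V \<and> a \<noteq> b \<and> e = {a, b} \<and> arc (c e) \<and>
         {pathstart (c e), pathfinish (c e)} = {pos a, pos b} \<and>
         path_image (c e) \<inter> pos ` V = {pos a, pos b}) \<and>
     (\<forall>e\<in>E. \<forall>f\<in>E. \<forall>p. crossing_pt V pos c e f p \<longrightarrow>
         e \<inter> f = {} \<and> transversal (path_image (c e)) (path_image (c f)) p) \<and>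
     (\<forall>e\<in>E. \<forall>f\<in>E. \<forall>g\<in>E. \<forall>p q. crossing_pt V pos c e f p \<and> crossing_pt V pos c e g q
         \<longrightarrow> f = g \<and> p = q)"

definition maximal_one_plane ::
  "'v set \<Rightarrow> 'v set set \<Rightarrow> ('v \<Rightarrow> complex) \<Rightarrow> ('v set \<Rightarrow> real \<Rightarrow> complex) \<Rightarrow> bool" where
  "maximal_one_plane V E pos c \<longleftrightarrow> one_plane V E pos c \<and>
     (\<forall>a\<in>V. \<forall>b\<in>V. \<forall>\<gamma>. a \<noteq> b \<and> {a, b} \<notin> E \<longrightarrow>
        \<not> one_plane V (insert {a, b} E) pos (c({a, b} := \<gamma>)))"

definition isK4 :: "'v set \<Rightarrow> 'v set set \<Rightarrow> 'v set \<Rightarrow> bool" where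
  "isK4 V E S \<longleftrightarrow> S \<subseteq> V \<and> card S = 4 \<and> (\<forall>a\<in>S. \<forall>b\<in>S. a \<noteq> b \<longrightarrow> {a, b} \<in> E)"

definition nbhd :: "'v set set \<Rightarrow> 'v \<Rightarrow> 'v set" where
  "nbhd E u = {x. {u, x} \<in> E}"

definition induced_edges :: "'v set set \<Rightarrow> 'v set \<Rightarrow> 'v set set" where
  "induced_edges E A = {e \<in> E. e \<subseteq> A}"

definition drawing_pts ::
  "'v set \<Rightarrow> 'v set set \<Rightarrow> ('v \<Rightarrow> complex) \<Rightarrow> ('v set \<Rightarrow> real \<Rightarrow> complex) \<Rightarrow> complex set" where
  "drawing_pts V E pos c = pos ` V \<union> (\<Union>e\<in>E. path_image (c e))"

definition clean ::
  "'v set \<Rightarrow> 'v set set \<Rightarrow> ('v \<Rightarrow> complex) \<Rightarrow> ('v set \<Rightarrow> real \<Rightarrow> complex) \<Rightarrow> 'v set \<Rightarrow> bool" where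
  "clean V E pos c e \<longleftrightarrow> \<not> (\<exists>f\<in>E. \<exists>p. crossing_pt V pos c e f p)"

text \<open>sigma is an initial piece of the drawn edge e starting at vertex u which contains
  no crossing point (so it lies within the near half-edge at u if e is crossed).\<close>
definition init_seg ::
  "'v set \<Rightarrow> 'v set set \<Rightarrow> ('v \<Rightarrow> complex) \<Rightarrow> ('v set \<Rightarrow> real \<Rightarrow> complex) \<Rightarrow> 'v \<Rightarrow> 'v set \<Rightarrow> (real \<Rightarrow> complex) \<Rightarrow> bool" where
  "init_seg V E pos c u e \<sigma> \<longleftrightarrow> arc \<sigma> \<and> pathstart \<sigma> = pos u \<and> pathfinish \<sigma> \<notin> pos ` V \<and>
     path_image \<sigma> \<subseteq> path_image (c e) \<and>
     (\<forall>f\<in>E. f \<noteq> e \<longrightarrow> path_image \<sigma> \<inter> path_image (c f) \<subseteq> {pos u})"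

text \<open>The edges {u,x} and {u,w} (or their near half-edges at u) are consecutive on the
  boundary of some face: there is an arc gamma through a face joining points of the two
  edge segments at u such that the resulting simple closed curve bounds a region
  (a complementary component) containing no point of the drawing.\<close>
definition consecutive_at ::
  "'v set \<Rightarrow> 'v set set \<Rightarrow> ('v \<Rightarrow> complex) \<Rightarrow> ('v set \<Rightarrow> real \<Rightarrow> complex) \<Rightarrow> 'v \<Rightarrow> 'v \<Rightarrow> 'v \<Rightarrow> bool" where
  "consecutive_at V E pos c u x w \<longleftrightarrow>
     (\<exists>\<sigma>1 \<sigma>2 \<gamma>. init_seg V E pos c u {u, x} \<sigma>1 \<and> init_seg V E pos c u {u, w} \<sigma>2 \<and>
        arc \<gamma> \<and> pathstart \<gamma> = pathfinish \<sigma>1 \<and> pathfinish \<gamma> = pathfinish \<sigma>2 \<and>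
        (path_image \<gamma> - {pathstart \<gamma>, pathfinish \<gamma>}) \<inter> drawing_pts V E pos c = {} \<and>
        simple_path (\<sigma>1 +++ \<gamma> +++ reversepath \<sigma>2) \<and>
        (\<exists>C \<in> components (- path_image (\<sigma>1 +++ \<gamma> +++ reversepath \<sigma>2)).
            C \<inter> drawing_pts V E pos c = {}))"

definition K4_link :: "'v set \<Rightarrow> 'v set set \<Rightarrow> 'v set \<Rightarrow> 'v set \<Rightarrow> bool" where
  "K4_link V E A F \<longleftrightarrow> isK4 V E F \<and> 1 \<le> card (F \<inter> A) \<and> card (F \<inter> A) \<le> 3"

definition strong_link :: "'v set \<Rightarrow> 'v set set \<Rightarrow> 'v set \<Rightarrow> 'v set \<Rightarrow> bool" where
  "strong_link V E A F \<longleftrightarrow> isK4 V E F \<and> card (F \<inter> A) = 3"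

definition weak_link :: "'v set \<Rightarrow> 'v set set \<Rightarrow> 'v set \<Rightarrow> 'v set \<Rightarrow> bool" where
  "weak_link V E A F \<longleftrightarrow> isK4 V E F \<and> card (F \<inter> A) = 2"

definition micro_link :: "'v set \<Rightarrow> 'v set set \<Rightarrow> 'v set \<Rightarrow> 'v set \<Rightarrow> bool" where
  "micro_link V E A F \<longleftrightarrow> isK4 V E F \<and> card (F \<inter> A) = 1"

definition swm_choice ::
  "'v set \<Rightarrow> 'v set set \<Rightarrow> ('v \<Rightarrow> complex) \<Rightarrow> ('v set \<Rightarrow> real \<Rightarrow> complex) \<Rightarrow> 'v set \<Rightarrow> 'v set \<Rightarrow> bool" where
  "swm_choice V E pos c A F \<longleftrightarrow>
     (if \<exists>S. strong_link V E A S then strong_link V E A F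
      else if \<exists>S. weak_link V E A S then weak_link V E A F
      else (\<exists>u x w. u \<in> A \<and> x \<in> nbhd E u - A \<and> w \<in> nbhd E u \<inter> A \<and>
              consecutive_at V E pos c u x w \<and>
              ((clean V E pos c {u, x} \<and> isK4 V E F \<and> {u, x} \<subseteq> F) \<or>
               (\<exists>s t. {s, t} \<in> E \<and> (\<exists>p. crossing_pt V pos c {u, x} {s, t} p) \<and>
                      F = {u, x, s, t}))))"

text \<open>A K4-extension sequence G_0,...,G_N (given by vertex sets A i) determined by the
  SWM*-rule, with links F i.\<close>
definition swm_sequence ::
  "'v set \<Rightarrow> 'v set set \<Rightarrow> ('v \<Rightarrow> complex) \<Rightarrow> ('v set \<Rightarrow> real \<Rightarrow> complex) \<Rightarrow>
   nat \<Rightarrow> (nat \<Rightarrow> 'v set) \<Rightarrow> (nat \<Rightarrow> 'v set) \<Rightarrow> bool" where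
  "swm_sequence V E pos c N A F \<longleftrightarrow>
     isK4 V E (A 0) \<and> A N = V \<and>
     (\<forall>i \<in> {1..N}. K4_link V E (A (i - 1)) (F i) \<and> A i = A (i - 1) \<union> F i \<and>
                   swm_choice V E pos c (A (i - 1)) (F i))"

definition simple_micro_link :: "'v set \<Rightarrow> 'v set set \<Rightarrow> 'v set \<Rightarrow> 'v set \<Rightarrow> bool" where
  "simple_micro_link V E A F \<longleftrightarrow> micro_link V E A F \<and>
     card (induced_edges E (A \<union> F) - (induced_edges E A \<union> induced_edges E F)) = 1"

end

theory Submission
  imports Defs
begin

text \<open>The extra edge of a simple micro link lies in some \<open>K\<^sub>4\<close>-subgraph \<open>S\<close>. Any two
  vertices of \<open>S\<close> on opposite sides of the link would span a further extra edge, so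
  at most three vertices of \<open>S\<close> (the two ends of the extra edge and the one shared
  vertex) lie in the new vertex set. Hence the sequence does not stop there, and \<open>S\<close>,
  sharing two or three vertices with it, is a strong or weak link, which the SWM*-rule
  then prefers over micro links.\<close>

definition extra_edges :: "'v set set \<Rightarrow> 'v set \<Rightarrow> 'v set \<Rightarrow> 'v set set" where
  "extra_edges E B G = induced_edges E (B \<union> G) - (induced_edges E B \<union> induced_edges E G)"

lemma simple_micro_link_iff:
  "simple_micro_link V E B G \<longleftrightarrow> micro_link V E B G \<and> card (extra_edges E B G) = 1"
  unfolding simple_micro_link_def extra_edges_def ..

lemma extra_edges_iff:
  "e \<in> extra_edges E B G \<longleftrightarrow> e \<in> E \<and> e \<subseteq> B \<union> G \<and> \<not> e \<subseteq> B \<and> \<not> e \<subseteq> G"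
  unfolding extra_edges_def induced_edges_def by blast

lemma extra_edge_endpoints:
  assumes "e \<in> extra_edges E B G"
  obtains a b where "a \<in> e" "a \<in> B - G" "b \<in> e" "b \<in> G - B"
  using assms unfolding extra_edges_iff by blast

lemma K4_through_unique_extra_edge_not_subset:
  assumes K4: "isK4 V E S" and "e \<subseteq> S"
    and extra: "extra_edges E B G = {e}" and meet: "card (B \<inter> G) = 1"
  shows "\<not> S \<subseteq> B \<union> G"
proof
  assume sub: "S \<subseteq> B \<union> G"
  have "e \<in> extra_edges E B G" using extra by simp
  then obtain a b where a: "a \<in> e" "a \<in> B - G" and b: "b \<in> e" "b \<in> G - B"
    by (rule extra_edge_endpoints)
  have edge_is_e: "{p, q} = e" if "p \<in> S" "q \<in> S" "p \<in> B - G" "q \<in> G - B" for p q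
  proof -
    have "p \<noteq> q" using that by blast
    with K4 that have "{p, q} \<in> E" unfolding isK4_def by blast
    then have "{p, q} \<in> extra_edges E B G"
      using that sub unfolding extra_edges_iff by blast
    then show ?thesis using extra by simp
  qed
  have cover: "S \<subseteq> {a, b} \<union> (S \<inter> B \<inter> G)"
  proof
    fix x assume x: "x \<in> S"
    have "x = a" if "x \<in> B - G"
      using edge_is_e[OF x _ that b(2)] \<open>e \<subseteq> S\<close> a b by auto
    moreover have "x = b" if "x \<in> G - B"
      using edge_is_e[OF _ x a(2) that] \<open>e \<subseteq> S\<close> a b by auto
    ultimately show "x \<in> {a, b} \<union> (S \<inter> B \<inter> G)" using x sub by blast
  qed
  have "finite S" using K4 unfolding isK4_def by (simp add: card_ge_0_finite)
  then have "card S \<le> card ({a, b} \<union> (S \<inter> B \<inter> G))"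
    using cover by (intro card_mono) auto
  also have "\<dots> \<le> card {a, b} + card (S \<inter> B \<inter> G)" by (rule card_Un_le)
  also have "\<dots> \<le> 2 + card (B \<inter> G)"
  proof (rule add_mono)
    show "card {a, b} \<le> 2" by (simp add: card_insert_if)
    show "card (S \<inter> B \<inter> G) \<le> card (B \<inter> G)"
      using meet by (intro card_mono) (auto simp: card_ge_0_finite)
  qed
  finally have "card S \<le> 3" using meet by simp
  then show False using K4 unfolding isK4_def by simp
qed

lemma isK4_strong_or_weak_link:
  assumes K4: "isK4 V E S" and "a \<in> S \<inter> X" "b \<in> S \<inter> X" "a \<noteq> b" and "\<not> S \<subseteq> X"
  shows "strong_link V E X S \<or> weak_link V E X S"
proof -
  have "finite S" "card S = 4" using K4 unfolding isK4_def by (auto simp: card_ge_0_finite)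
  have "2 \<le> card (S \<inter> X)"
    using assms(2-4) \<open>finite S\<close> card_mono[of "S \<inter> X" "{a, b}"] by auto
  moreover have "card (S \<inter> X) < 4"
    using \<open>card S = 4\<close> \<open>finite S\<close> \<open>\<not> S \<subseteq> X\<close> psubset_card_mono[of S "S \<inter> X"] by auto
  ultimately show ?thesis
    using K4 unfolding strong_link_def weak_link_def by auto
qed

lemma swm_choice_strong_or_weak:
  assumes "swm_choice V E pos c X F" and "strong_link V E X S \<or> weak_link V E X S"
  shows "strong_link V E X F \<or> weak_link V E X F"
  using assms unfolding swm_choice_def by (auto split: if_splits)

lemma swm_sequence_step:
  assumes "swm_sequence V E pos c N A F" and "i \<in> {1..N}"
  shows "A i = A (i - 1) \<union> F i" and "swm_choice V E pos c (A (i - 1)) (F i)"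
  using assms unfolding swm_sequence_def by auto

lemma swm_sequence_last: "swm_sequence V E pos c N A F \<Longrightarrow> A N = V"
  unfolding swm_sequence_def by blast

theorem lemma4p2:
  fixes V :: "'v set" and E :: "'v set set" and pos :: "'v \<Rightarrow> complex"
    and c :: "'v set \<Rightarrow> real \<Rightarrow> complex"
    and N :: nat and A F :: "nat \<Rightarrow> 'v set" and i :: nat
  assumes "maximal_one_plane V E pos c"
    and "card V \<ge> 4"
    and "\<forall>e\<in>E. \<exists>S. isK4 V E S \<and> e \<subseteq> S"
    and "swm_sequence V E pos c N A F"
    and "i \<in> {1..N}"
    and "simple_micro_link V E (A (i - 1)) (F i)"
  shows "i < N \<and> (strong_link V E (A i) (F (i + 1)) \<or> weak_link V E (A i) (F (i + 1)))"
proof -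
  have Ai: "A i = A (i - 1) \<union> F i" using assms(4,5) by (rule swm_sequence_step)
  obtain e where extra: "extra_edges E (A (i - 1)) (F i) = {e}"
    and meet: "card (A (i - 1) \<inter> F i) = 1"
    using assms(6) unfolding simple_micro_link_iff micro_link_def
    by (metis Int_commute card_1_singletonE)
  have e: "e \<in> extra_edges E (A (i - 1)) (F i)" using extra by simp
  then obtain a b where "a \<in> e" "a \<in> A (i - 1) - F i" "b \<in> e" "b \<in> F i - A (i - 1)"
    by (rule extra_edge_endpoints)
  then have ab: "a \<in> e" "a \<in> A i" "b \<in> e" "b \<in> A i" "a \<noteq> b" using Ai by auto
  obtain S where S: "isK4 V E S" "e \<subseteq> S"
    using assms(3) e unfolding extra_edges_iff by blast
  have outside: "\<not> S \<subseteq> A i"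
    using K4_through_unique_extra_edge_not_subset[OF S extra] meet Ai by simp
  have "i < N"
    using assms(5) outside S(1) swm_sequence_last[OF assms(4)]
    unfolding isK4_def by (metis atLeastAtMost_iff le_neq_implies_less)
  moreover have "strong_link V E (A i) S \<or> weak_link V E (A i) S"
    using isK4_strong_or_weak_link[OF S(1)] ab S(2) outside by blast
  moreover have "swm_choice V E pos c (A i) (F (i + 1))"
    using swm_sequence_step(2)[OF assms(4), of "i + 1"] \<open>i < N\<close> by simp
  ultimately show ?thesis using swm_choice_strong_or_weak by blast
qed

end
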